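(* Let $N\ge1$, $\sigma\ge0$, and let $(x_i(t),v_i(t))_{i=1}^N$, $t\ge0$, be a solution of $$\dot x_i=v_i,\qquad \dot v_i=-\frac{\|v_i\|^2}{\|x_i\|^2}x_i+\sum_{j=1}^N\frac{\psi_{ij}}{N}\big(R(x_j,x_i)v_j-v_i\big)+\sum_{k=1}^N\frac{\sigma}{N}\big(\|x_i\|^2x_k-\langle x_i,x_k\rangle x_i\big),$$ with initial data satisfying $\|x_i(0)\|=1$ and $\langle v_i(0),x_i(0)\rangle=0$ for all $i$, where the $\psi_{ij}$ are nonnegative bounded functions with $\psi_{ij}=\psi_{ji}$ for all $i,j$. Then $$\frac{d\mathcal{E}}{dt}=-\sum_{i,j=1}^N\frac{\psi_{ij}}{N^2}\big\|R(x_j,x_i)v_j-v_i\big\|^2,$$ and for all $t\ge0$, $$\mathcal{V}(t):=\max_{1\le i\le N}\|v_i(t)\|\le\sqrt{N\mathcal{E}(0)}.$$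
   Context: $\|\cdot\|$ is the Euclidean norm and $\langle\cdot,\cdot\rangle$ the standard inner product on $\mathbb{R}^3$. For column vectors $x_1,x_2\in\mathbb{S}^2$ with $x_1\neq -x_2$: $R(x_1,x_2)=I$ if $x_1=x_2$, and otherwise $R(x_1,x_2)=\langle x_1,x_2\rangle I-x_1x_2^T+x_2x_1^T+(1-\langle x_1,x_2\rangle)uu^T$ with $u=\frac{x_1\times x_2}{\|x_1\times x_2\|}$. When $x_j=-x_i$, the terms $\psi_{ij}R(x_j,x_i)v_j$ and $\psi_{ij}\|R(x_j,x_i)v_j-v_i\|^2$ are taken to be $0$. The energy is $\mathcal{E}=\mathcal{E}_K+\mathcal{E}_C$ with $\mathcal{E}_K(t)=\frac1N\sum_{k=1}^N\|v_k(t)\|^2$ and $\mathcal{E}_C(t)=\frac{\sigma}{2N^2}\sum_{k,l=1}^N\|x_k(t)-x_l(t)\|^2$. *)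

theory Defs
  imports "HOL-Analysis.Analysis"
begin

definition outer3 :: "real^3 \<Rightarrow> real^3 \<Rightarrow> real^3^3" where
  "outer3 a b = (\<chi> i j. a $ i * b $ j)"

definition Rmat :: "real^3 \<Rightarrow> real^3 \<Rightarrow> real^3^3" where
  "Rmat x1 x2 =
     (if x1 = x2 then mat 1
      else (let u = (1 / norm (cross3 x1 x2)) *\<^sub>R cross3 x1 x2 in
            (x1 \<bullet> x2) *\<^sub>R mat 1 - outer3 x1 x2 + outer3 x2 x1
            + (1 - x1 \<bullet> x2) *\<^sub>R outer3 u u))"

definition align_term :: "real^3 \<Rightarrow> real^3 \<Rightarrow> real^3 \<Rightarrow> real^3 \<Rightarrow> real^3" where
  "align_term xj xi vj vi = (if xj = - xi then 0 else Rmat xj xi *v vj - vi)"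

definition energy :: "real \<Rightarrow> ('i::finite \<Rightarrow> real^3) \<Rightarrow> ('i \<Rightarrow> real^3) \<Rightarrow> real" where
  "energy \<sigma> x v =
     (1 / real CARD('i)) * (\<Sum>k\<in>UNIV. (norm (v k))^2)
     + \<sigma> / (2 * (real CARD('i))^2) * (\<Sum>k\<in>UNIV. \<Sum>l\<in>UNIV. (norm (x k - x l))^2)"

end

theory Submission
  imports Defs
begin

(* R(x_j, x_i) is the Rodrigues rotation about x_j \<times> x_i taking x_j to x_i, so it is an isometry
   and <x_i, R(x_j, x_i) w> = |x_i|^2 <x_j, w>. Hence along any solution the derivatives of the
   defects |x_i|^2 - 1 and <x_i, v_i> are bounded linearly by the defects themselves, with
   coefficients bounded on compact time intervals; the sum of their squares obeys L' <= K L, and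
   since it vanishes initially, Gronwall keeps it zero: the particles stay on the sphere with
   tangent velocities. There the bonding force does no net work against the potential energy,
   and the isometry gives 2 <v_i, R v_j - v_i> + |R v_j - v_i|^2 = |v_j|^2 - |v_i|^2, which
   cancels in the double sum by the symmetry of psi. What is left is the dissipation identity, so
   E is nonincreasing, and |v_i|^2 <= N E_K <= N E gives the velocity bound. *)

unbundle cross3_syntax

section \<open>The rotation matrix\<close>

lemma outer3_mult_vector: "outer3 a b *v w = (b \<bullet> w) *\<^sub>R a"
  by (simp add: vec_eq_iff outer3_def matrix_vector_mult_def inner_vec_def sum_3 algebra_simps)

lemma cross_cross_left: "(a \<times> b) \<times> w = (a \<bullet> w) *\<^sub>R b - (b \<bullet> w) *\<^sub>R a"
  by (metis Lagrange cross_skew inner_commute minus_diff_eq)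

text \<open>Rodrigues' form of the rotation about \<open>a \<times> b\<close> taking \<open>a\<close> to \<open>b\<close> (for unit vectors).\<close>

lemma Rmat_mult_vector:
  assumes "a \<noteq> b"
  shows "Rmat a b *v w = (a \<bullet> b) *\<^sub>R w + (a \<times> b) \<times> w
           + ((1 - a \<bullet> b) * ((a \<times> b) \<bullet> w) / (norm (a \<times> b))\<^sup>2) *\<^sub>R (a \<times> b)"
  using assms
  by (simp add: Rmat_def Let_def cross_cross_left matrix_vector_mult_add_rdistrib
      matrix_vector_mult_diff_rdistrib scaleR_matrix_vector_assoc[symmetric] outer3_mult_vector
      inner_commute power2_eq_square)

lemma inner_Rmat_target:
  "b \<bullet> (Rmat a b *v w) = (if a = b then b \<bullet> w else (b \<bullet> b) * (a \<bullet> w))"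
proof (cases "a = b")
  case True
  then show ?thesis by (simp add: Rmat_def)
next
  case False
  have "b \<bullet> (a \<times> b) = 0"
    by (simp add: inner_commute dot_cross_self)
  with False show ?thesis
    by (simp add: Rmat_mult_vector cross_cross_left inner_add_right inner_diff_right inner_commute)
qed

lemma unit_cross_eq_0:
  assumes a: "norm a = 1" and b: "norm b = 1" and "a \<times> b = 0"
  shows "a = b \<or> a = - b"
proof -
  have ba: "b = (a \<bullet> b) *\<^sub>R a"
    using Lagrange[of a a b] assms by (simp add: inner_commute norm_eq_1[THEN iffD1])
  then have "\<bar>a \<bullet> b\<bar> = 1"
    using a b by (metis mult.right_neutral norm_scaleR)
  then consider "a \<bullet> b = 1" | "a \<bullet> b = -1"
    by linarith
  then show ?thesis
    using ba by cases auto
qed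

lemma norm_Rmat_mult_vector:
  assumes a: "norm a = 1" and b: "norm b = 1" and "a \<noteq> - b"
  shows "norm (Rmat a b *v w) = norm w"
proof (cases "a = b")
  case True
  then show ?thesis by (simp add: Rmat_def)
next
  case False
  define c where "c = a \<bullet> b"
  define n where "n = a \<times> b"
  define k where "k = (n \<bullet> w) / (1 + c)"
  have nn: "(norm n)\<^sup>2 = (1 - c) * (1 + c)"
    using norm_cross[of a b] a b by (simp add: n_def c_def power2_eq_square algebra_simps)
  have "n \<noteq> 0"
    using unit_cross_eq_0[OF a b] False assms(3) by (auto simp: n_def)
  then have "1 - c \<noteq> 0" "1 + c \<noteq> 0"
    using nn by auto
  have Rw: "Rmat a b *v w = c *\<^sub>R w + n \<times> w + k *\<^sub>R n"
  proof -
    have "(1 - c) * (n \<bullet> w) / (norm n)\<^sup>2 = k"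
      using \<open>1 - c \<noteq> 0\<close> unfolding nn k_def by simp
    then show ?thesis
      using Rmat_mult_vector[OF False] by (simp add: c_def n_def)
  qed
  have nn': "n \<bullet> n = (1 - c) * (1 + c)"
    using nn by (simp add: power2_norm_eq_inner)
  have nw: "n \<bullet> w = k * (1 + c)"
    using \<open>1 + c \<noteq> 0\<close> by (simp add: k_def)
  have kk: "k\<^sup>2 * (n \<bullet> n) + 2 * c * k * (n \<bullet> w) = (n \<bullet> w)\<^sup>2"
    unfolding nn' nw by (simp add: power2_eq_square algebra_simps)
  have Q: "(n \<times> w) \<bullet> (n \<times> w) = (n \<bullet> n) * (w \<bullet> w) - (n \<bullet> w)\<^sup>2"
    using norm_cross[of n w] by (simp only: power2_norm_eq_inner)
  have "(c *\<^sub>R w + n \<times> w + k *\<^sub>R n) \<bullet> (c *\<^sub>R w + n \<times> w + k *\<^sub>R n)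
        = c\<^sup>2 * (w \<bullet> w) + (n \<times> w) \<bullet> (n \<times> w) + (k\<^sup>2 * (n \<bullet> n) + 2 * c * k * (n \<bullet> w))"
    by (simp add: inner_add_left inner_add_right dot_cross_self cross_triple[of n w n] inner_commute
        power2_eq_square algebra_simps)
  also have "\<dots> = w \<bullet> w"
    unfolding kk unfolding Q nn' by (simp add: power2_eq_square algebra_simps)
  finally show ?thesis
    unfolding Rw by (simp only: norm_eq_sqrt_inner)
qed

section \<open>Finite double sums\<close>

lemma sum_symmetric_weighted_differences:
  assumes "finite I" and "\<And>i j. w i j = w j i"
  shows "(\<Sum>i\<in>I. \<Sum>j\<in>I. w i j * (f j - f i)) = (0::real)"
proof -
  have "(\<Sum>i\<in>I. \<Sum>j\<in>I. w i j * f j) = (\<Sum>i\<in>I. \<Sum>j\<in>I. w i j * f i)"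
    by (subst sum.swap) (simp add: assms(2))
  then show ?thesis
    by (simp add: right_diff_distrib sum_subtractf)
qed

lemma sum_inner_pairwise_differences:
  fixes x v :: "'i \<Rightarrow> 'a::real_inner"
  assumes "finite I" and "\<And>k. k \<in> I \<Longrightarrow> x k \<bullet> v k = 0"
  shows "(\<Sum>k\<in>I. \<Sum>l\<in>I. (x k - x l) \<bullet> (v k - v l)) = - 2 * (\<Sum>k\<in>I. \<Sum>l\<in>I. v k \<bullet> x l)"
proof -
  have "(\<Sum>k\<in>I. \<Sum>l\<in>I. (x k - x l) \<bullet> (v k - v l))
          = - (\<Sum>k\<in>I. \<Sum>l\<in>I. v l \<bullet> x k) - (\<Sum>k\<in>I. \<Sum>l\<in>I. v k \<bullet> x l)"
    using assms(2)
    by (simp add: inner_diff_left inner_diff_right inner_commute sum_subtractf sum_negf[symmetric])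
  also have "(\<Sum>k\<in>I. \<Sum>l\<in>I. v l \<bullet> x k) = (\<Sum>k\<in>I. \<Sum>l\<in>I. v k \<bullet> x l)"
    by (rule sum.swap)
  finally show ?thesis
    by simp
qed

text \<open>The left-hand side is the derivative of \<open>\<Sum>i. a i\<^sup>2 + b i\<^sup>2\<close> when \<open>a i' = 2 * b i\<close> and \<open>b i' = d i\<close>.\<close>

lemma sum_quadratic_growth_bound:
  fixes a b d :: "'i \<Rightarrow> real"
  assumes "finite I" and "0 \<le> C"
    and d: "\<And>i. i \<in> I \<Longrightarrow> \<bar>d i\<bar> \<le> C * (\<bar>a i\<bar> + (\<Sum>j\<in>I. \<bar>b j\<bar>))"
  shows "(\<Sum>i\<in>I. 2 * a i * (2 * b i) + 2 * b i * d i)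
           \<le> (2 + C + 2 * C * card I) * (\<Sum>i\<in>I. (a i)\<^sup>2 + (b i)\<^sup>2)"
proof -
  have per: "2 * a i * (2 * b i) + 2 * b i * d i
               \<le> (2 + C) * ((a i)\<^sup>2 + (b i)\<^sup>2) + C * (\<Sum>j\<in>I. (b i)\<^sup>2 + (b j)\<^sup>2)" if "i \<in> I" for i
  proof -
    have "2 * b i * d i \<le> 2 * \<bar>b i\<bar> * \<bar>d i\<bar>"
      using abs_ge_self[of "2 * b i * d i"] by (simp add: abs_mult)
    also have "\<dots> \<le> 2 * \<bar>b i\<bar> * (C * (\<bar>a i\<bar> + (\<Sum>j\<in>I. \<bar>b j\<bar>)))"
      using d[OF that] by (intro mult_left_mono; simp)
    also have "\<dots> = C * (2 * \<bar>a i\<bar> * \<bar>b i\<bar>) + C * (\<Sum>j\<in>I. 2 * \<bar>b i\<bar> * \<bar>b j\<bar>)"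
      by (simp add: sum_distrib_left algebra_simps)
    also have "\<dots> \<le> C * ((a i)\<^sup>2 + (b i)\<^sup>2) + C * (\<Sum>j\<in>I. (b i)\<^sup>2 + (b j)\<^sup>2)"
      using sum_squares_bound[of "\<bar>a i\<bar>" "\<bar>b i\<bar>"] sum_squares_bound[of "\<bar>b i\<bar>" "\<bar>b _\<bar>"] \<open>0 \<le> C\<close>
      by (intro add_mono mult_left_mono sum_mono; simp)
    finally have "2 * b i * d i \<le> C * ((a i)\<^sup>2 + (b i)\<^sup>2) + C * (\<Sum>j\<in>I. (b i)\<^sup>2 + (b j)\<^sup>2)" .
    moreover have "2 * a i * (2 * b i) \<le> 2 * ((a i)\<^sup>2 + (b i)\<^sup>2)"
      using sum_squares_bound[of "a i" "b i"] by simp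
    ultimately show ?thesis
      by (simp add: distrib_right)
  qed
  have "(\<Sum>i\<in>I. 2 * a i * (2 * b i) + 2 * b i * d i)
          \<le> (\<Sum>i\<in>I. (2 + C) * ((a i)\<^sup>2 + (b i)\<^sup>2) + C * (\<Sum>j\<in>I. (b i)\<^sup>2 + (b j)\<^sup>2))"
    using per by (rule sum_mono)
  also have "\<dots> = (2 + C) * (\<Sum>i\<in>I. (a i)\<^sup>2 + (b i)\<^sup>2) + 2 * C * card I * (\<Sum>i\<in>I. (b i)\<^sup>2)"
    by (simp add: sum.distrib sum_distrib_left[symmetric] algebra_simps)
  also have "\<dots> \<le> (2 + C) * (\<Sum>i\<in>I. (a i)\<^sup>2 + (b i)\<^sup>2) + 2 * C * card I * (\<Sum>i\<in>I. (a i)\<^sup>2 + (b i)\<^sup>2)"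
    using \<open>0 \<le> C\<close> by (intro add_left_mono mult_left_mono sum_mono; simp)
  finally show ?thesis
    by (simp add: distrib_right)
qed

section \<open>Differential inequalities\<close>

lemma DERIV_nonpos_within_imp_decreasing:
  fixes f :: "real \<Rightarrow> real"
  assumes "a \<le> b" and "{a..b} \<subseteq> S"
    and deriv: "\<And>s. s \<in> {a..b} \<Longrightarrow> (f has_real_derivative f' s) (at s within S)"
    and nonpos: "\<And>s. s \<in> {a..b} \<Longrightarrow> f' s \<le> 0"
  shows "f b \<le> f a"
proof (rule DERIV_nonpos_imp_decreasing_open[OF \<open>a \<le> b\<close>])
  fix s assume s: "a < s" "s < b"
  have "at s within S = at s"
    using s \<open>{a..b} \<subseteq> S\<close> by (intro at_within_open_subset[of _ "{a<..<b}"]) auto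
  then show "\<exists>y. (f has_real_derivative y) (at s) \<and> y \<le> 0"
    using deriv[of s] nonpos[of s] s by auto
next
  have "(f has_real_derivative f' s) (at s within {a..b})" if "s \<in> {a..b}" for s
    using deriv[OF that] \<open>{a..b} \<subseteq> S\<close> by (rule has_field_derivative_subset)
  then show "continuous_on {a..b} f"
    using DERIV_continuous continuous_on_eq_continuous_within by blast
qed

lemma gronwall_differential_inequality:
  fixes L L' :: "real \<Rightarrow> real"
  assumes "a \<le> b" and "{a..b} \<subseteq> S"
    and deriv: "\<And>s. s \<in> {a..b} \<Longrightarrow> (L has_real_derivative L' s) (at s within S)"
    and growth: "\<And>s. s \<in> {a..b} \<Longrightarrow> L' s \<le> K * L s"
  shows "L b \<le> exp (K * (b - a)) * L a"
proof -
  define g where "g s = exp (- K * s) * L s" for s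
  have "g b \<le> g a"
  proof (rule DERIV_nonpos_within_imp_decreasing[OF assms(1,2)])
    fix s assume s: "s \<in> {a..b}"
    show "(g has_real_derivative exp (- K * s) * (L' s - K * L s)) (at s within S)"
      unfolding g_def
      by (rule derivative_eq_intros deriv[OF s] refl | simp add: algebra_simps)+
    show "exp (- K * s) * (L' s - K * L s) \<le> 0"
      using growth[OF s] by (simp add: mult_nonneg_nonpos)
  qed
  have "L b = exp (K * b) * g b"
    by (simp add: g_def exp_minus field_simps)
  also have "\<dots> \<le> exp (K * b) * g a"
    using \<open>g b \<le> g a\<close> by simp
  also have "\<dots> = exp (K * (b - a)) * L a"
    by (simp add: g_def right_diff_distrib exp_diff exp_minus field_simps)
  finally show ?thesis .
qed

lemma has_real_derivative_inner:
  assumes "(f has_vector_derivative f') (at t within S)" and "(g has_vector_derivative g') (at t within S)"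
  shows "((\<lambda>s. f s \<bullet> g s) has_real_derivative f' \<bullet> g t + f t \<bullet> g') (at t within S)"
  using bounded_bilinear.has_vector_derivative[OF bounded_bilinear_inner assms]
  by (simp add: has_real_derivative_iff_has_vector_derivative add.commute)

lemma has_real_derivative_norm_power2:
  assumes "(f has_vector_derivative f') (at t within S)"
  shows "((\<lambda>s. (norm (f s))\<^sup>2) has_real_derivative 2 * (f t \<bullet> f')) (at t within S)"
  using has_real_derivative_inner[OF assms assms] by (simp add: power2_norm_eq_inner inner_commute)

lemma compact_family_bounded:
  fixes f :: "'i::finite \<Rightarrow> 'a::topological_space \<Rightarrow> 'b::real_normed_vector"
  assumes "compact S" and "\<And>i. continuous_on S (f i)"
  obtains B where "\<And>i s. s \<in> S \<Longrightarrow> norm (f i s) \<le> B"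
proof -
  have "bounded (\<Union>i. f i ` S)"
    using assms by (intro bounded_UN ballI compact_imp_bounded compact_continuous_image) auto
  then obtain B where "\<And>y. y \<in> (\<Union>i. f i ` S) \<Longrightarrow> norm y \<le> B"
    unfolding bounded_iff by auto
  then show ?thesis
    by (intro that) blast
qed

lemma trajectory_bounded:
  fixes x v :: "'i::finite \<Rightarrow> real \<Rightarrow> 'a::real_normed_vector"
  assumes "\<And>i t. 0 \<le> t \<Longrightarrow> (x i has_vector_derivative v i t) (at t within {0..})"
    and "\<And>i t. 0 \<le> t \<Longrightarrow> (v i has_vector_derivative a i t) (at t within {0..})"
  obtains B where "\<And>i s. s \<in> {0..T} \<Longrightarrow> norm (x i s) \<le> B" and "\<And>i s. s \<in> {0..T} \<Longrightarrow> norm (v i s) \<le> B"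
proof -
  have "continuous_on {0..T} (x i)" for i
    by (rule continuous_on_vector_derivative, rule has_vector_derivative_within_subset[OF assms(1)]) auto
  then obtain Bx where Bx: "\<And>i s. s \<in> {0..T} \<Longrightarrow> norm (x i s) \<le> Bx"
    by (rule compact_family_bounded[where f = x, OF compact_Icc]; blast)
  have "continuous_on {0..T} (v i)" for i
    by (rule continuous_on_vector_derivative, rule has_vector_derivative_within_subset[OF assms(2)]) auto
  then obtain Bv where Bv: "\<And>i s. s \<in> {0..T} \<Longrightarrow> norm (v i s) \<le> Bv"
    by (rule compact_family_bounded[where f = v, OF compact_Icc]; blast)
  show ?thesis
    using Bx Bv by (intro that[of "max Bx Bv"]; fastforce simp: le_max_iff_disj)
qed

text \<open>In the application, \<open>a i\<close> and \<open>b i\<close> are the defects \<open>|x i|\<^sup>2 - 1\<close> and \<open>x i \<bullet> v i\<close>.\<close>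

lemma coupled_defects_vanish:
  fixes a b d :: "'i::finite \<Rightarrow> real \<Rightarrow> real"
  assumes "0 \<le> T" and "0 \<le> C"
    and da: "\<And>i s. 0 \<le> s \<Longrightarrow> (a i has_real_derivative 2 * b i s) (at s within {0..})"
    and db: "\<And>i s. 0 \<le> s \<Longrightarrow> (b i has_real_derivative d i s) (at s within {0..})"
    and bound: "\<And>i s. s \<in> {0..T} \<Longrightarrow> \<bar>d i s\<bar> \<le> C * (\<bar>a i s\<bar> + (\<Sum>j\<in>UNIV. \<bar>b j s\<bar>))"
    and init: "\<And>i. a i 0 = 0" "\<And>i. b i 0 = 0"
  shows "a i T = 0 \<and> b i T = 0"
proof -
  define L where "L = (\<lambda>s. \<Sum>i\<in>UNIV. (a i s)\<^sup>2 + (b i s)\<^sup>2)"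
  have deriv: "(L has_real_derivative (\<Sum>i\<in>UNIV. 2 * a i s * (2 * b i s) + 2 * b i s * d i s))
                 (at s within {0..})" if "0 \<le> s" for s
    unfolding L_def by (rule DERIV_sum; (rule derivative_eq_intros da[OF that] db[OF that] refl | simp)+)
  have growth: "(\<Sum>i\<in>UNIV. 2 * a i s * (2 * b i s) + 2 * b i s * d i s) \<le> (2 + C + 2 * C * CARD('i)) * L s"
    if "s \<in> {0..T}" for s
    unfolding L_def using bound[OF that] by (rule sum_quadratic_growth_bound[OF finite_class.finite_UNIV \<open>0 \<le> C\<close>])
  have "L T \<le> exp ((2 + C + 2 * C * CARD('i)) * (T - 0)) * L 0"
    using deriv growth \<open>0 \<le> T\<close> by (intro gronwall_differential_inequality[where S = "{0..}"]) auto
  moreover have "L 0 = 0"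
    by (simp add: L_def init)
  moreover have "(a i T)\<^sup>2 + (b i T)\<^sup>2 \<le> L T"
    unfolding L_def by (rule member_le_sum) auto
  ultimately have "(a i T)\<^sup>2 + (b i T)\<^sup>2 \<le> 0"
    by simp
  then show ?thesis
    by (simp add: sum_power2_le_zero_iff)
qed

section \<open>The flocking model on the sphere\<close>

text \<open>At \<open>x i = 0\<close> the radial term vanishes, division by zero yielding \<open>0\<close>.\<close>

definition flock_accel ::
    "real \<Rightarrow> ('i::finite \<Rightarrow> 'i \<Rightarrow> real) \<Rightarrow> ('i \<Rightarrow> real^3) \<Rightarrow> ('i \<Rightarrow> real^3) \<Rightarrow> 'i \<Rightarrow> real^3" where
  "flock_accel \<sigma> \<psi> x v i =
     - ((norm (v i))\<^sup>2 / (norm (x i))\<^sup>2) *\<^sub>R x i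
     + (\<Sum>j\<in>UNIV. (\<psi> i j / real CARD('i)) *\<^sub>R align_term (x j) (x i) (v j) (v i))
     + (\<Sum>k\<in>UNIV. (\<sigma> / real CARD('i)) *\<^sub>R ((norm (x i))\<^sup>2 *\<^sub>R x k - (x i \<bullet> x k) *\<^sub>R x i))"

lemma inner_position_flock_accel:
  fixes x v :: "'i::finite \<Rightarrow> real^3"
  shows "x i \<bullet> flock_accel \<sigma> \<psi> x v i = (if x i = 0 then 0 else - (v i \<bullet> v i))
           + (\<Sum>j\<in>UNIV. \<psi> i j / real CARD('i) * (x i \<bullet> align_term (x j) (x i) (v j) (v i)))"
  by (simp add: flock_accel_def inner_add_right inner_diff_right inner_sum_right power2_norm_eq_inner)

lemma inner_velocity_flock_accel:
  fixes x v :: "'i::finite \<Rightarrow> real^3"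
  assumes "norm (x i) = 1" and "x i \<bullet> v i = 0"
  shows "v i \<bullet> flock_accel \<sigma> \<psi> x v i =
           (\<Sum>j\<in>UNIV. \<psi> i j / real CARD('i) * (v i \<bullet> align_term (x j) (x i) (v j) (v i)))
           + (\<Sum>k\<in>UNIV. \<sigma> / real CARD('i) * (v i \<bullet> x k))"
  using assms by (simp add: flock_accel_def inner_add_right inner_diff_right inner_sum_right inner_commute)

lemma inner_align_term_bound:
  "\<bar>xi \<bullet> align_term xj xi vj vi\<bar> \<le> (xi \<bullet> xi + 1) * (\<bar>xj \<bullet> vj\<bar> + \<bar>xi \<bullet> vi\<bar>)"
proof (cases "xj = - xi")
  case True
  then show ?thesis
    by (simp add: align_term_def)
next
  case False
  have "0 \<le> xi \<bullet> xi"
    by simp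
  then have "\<bar>xi \<bullet> (Rmat xj xi *v vj)\<bar> \<le> (xi \<bullet> xi + 1) * \<bar>xj \<bullet> vj\<bar>"
    by (cases "xj = xi"; simp add: inner_Rmat_target abs_mult mult_right_mono algebra_simps)
  moreover have "\<bar>xi \<bullet> vi\<bar> \<le> (xi \<bullet> xi + 1) * \<bar>xi \<bullet> vi\<bar>"
    by (simp add: algebra_simps)
  ultimately show ?thesis
    using False by (simp add: align_term_def inner_diff_right distrib_left abs_triangle_ineq4 order_trans[OF abs_triangle_ineq4])
qed

lemma align_term_energy_identity:
  assumes "norm xi = 1" and "norm xj = 1"
  shows "2 * (vi \<bullet> align_term xj xi vj vi) + (norm (align_term xj xi vj vi))\<^sup>2
           = (if xj = - xi then 0 else (norm vj)\<^sup>2 - (norm vi)\<^sup>2)"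
proof (cases "xj = - xi")
  case True
  then show ?thesis
    by (simp add: align_term_def)
next
  case False
  define w where "w = Rmat xj xi *v vj"
  have "norm w = norm vj"
    unfolding w_def using assms False by (intro norm_Rmat_mult_vector) (auto simp: minus_equation_iff)
  then have "w \<bullet> w = vj \<bullet> vj"
    by (metis power2_norm_eq_inner)
  then show ?thesis
    using False
    by (simp add: align_term_def w_def[symmetric] power2_norm_eq_inner inner_diff_left inner_diff_right
        inner_commute)
qed

lemma alignment_coupling_bound:
  fixes x v :: "'i::finite \<Rightarrow> real^3"
  assumes psi: "\<And>j. 0 \<le> \<psi> i j" "\<And>j. \<psi> i j \<le> M" and "x i \<bullet> x i \<le> B\<^sup>2"
  shows "\<bar>\<Sum>j\<in>UNIV. \<psi> i j / real CARD('i) * (x i \<bullet> align_term (x j) (x i) (v j) (v i))\<bar>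
           \<le> M * (B\<^sup>2 + 1) * (1 + real CARD('i)) * (\<Sum>j\<in>UNIV. \<bar>x j \<bullet> v j\<bar>)"
proof -
  define N where "N = real CARD('i)"
  define \<beta> where "\<beta> = (\<Sum>j\<in>UNIV. \<bar>x j \<bullet> v j\<bar>)"
  define A where "A j = align_term (x j) (x i) (v j) (v i)" for j
  have "1 \<le> N"
    by (simp add: N_def Suc_le_eq)
  have "0 \<le> M"
    using psi[of i] by linarith
  have term_bound: "\<bar>\<psi> i j / N * (x i \<bullet> A j)\<bar> \<le> M * ((B\<^sup>2 + 1) * (\<bar>x j \<bullet> v j\<bar> + \<bar>x i \<bullet> v i\<bar>))" for j
  proof -
    have "\<psi> i j / N \<le> \<psi> i j"
      using psi(1)[of j] \<open>1 \<le> N\<close> by (simp add: divide_le_eq mult_le_cancel_left1)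
    then have "\<psi> i j / N \<le> M"
      using psi(2)[of j] by linarith
    moreover have "\<bar>x i \<bullet> A j\<bar> \<le> (B\<^sup>2 + 1) * (\<bar>x j \<bullet> v j\<bar> + \<bar>x i \<bullet> v i\<bar>)"
      using inner_align_term_bound[of "x i" "x j" "v j" "v i"] \<open>x i \<bullet> x i \<le> B\<^sup>2\<close>
      by (simp add: A_def order_trans[OF _ mult_right_mono])
    ultimately have "\<psi> i j / N * \<bar>x i \<bullet> A j\<bar> \<le> M * ((B\<^sup>2 + 1) * (\<bar>x j \<bullet> v j\<bar> + \<bar>x i \<bullet> v i\<bar>))"
      using \<open>0 \<le> M\<close> by (intro mult_mono; simp)
    moreover have "\<bar>\<psi> i j / N * (x i \<bullet> A j)\<bar> = \<psi> i j / N * \<bar>x i \<bullet> A j\<bar>"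
      using psi(1)[of j] \<open>1 \<le> N\<close> by (simp add: abs_mult)
    ultimately show ?thesis
      by (simp only:)
  qed
  have "\<bar>x i \<bullet> v i\<bar> \<le> \<beta>"
    unfolding \<beta>_def by (rule member_le_sum) auto
  then have "\<beta> + N * \<bar>x i \<bullet> v i\<bar> \<le> (1 + N) * \<beta>"
    using \<open>1 \<le> N\<close> by (simp add: distrib_right mult_left_mono)
  have "\<bar>\<Sum>j\<in>UNIV. \<psi> i j / N * (x i \<bullet> A j)\<bar>
          \<le> (\<Sum>j\<in>UNIV. M * ((B\<^sup>2 + 1) * (\<bar>x j \<bullet> v j\<bar> + \<bar>x i \<bullet> v i\<bar>)))"
    using term_bound by (intro order_trans[OF sum_abs] sum_mono)
  also have "\<dots> = M * (B\<^sup>2 + 1) * (\<beta> + N * \<bar>x i \<bullet> v i\<bar>)"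
    by (simp add: \<beta>_def N_def sum.distrib sum_distrib_left algebra_simps)
  also have "\<dots> \<le> M * (B\<^sup>2 + 1) * ((1 + N) * \<beta>)"
    using \<open>\<beta> + N * \<bar>x i \<bullet> v i\<bar> \<le> (1 + N) * \<beta>\<close> \<open>0 \<le> M\<close> by (intro mult_left_mono; simp)
  finally show ?thesis
    by (simp add: A_def N_def \<beta>_def mult.assoc)
qed

text \<open>The left-hand side is the derivative of \<open>x i \<bullet> v i\<close> along the flow.\<close>

lemma flock_accel_defect_bound:
  fixes x v :: "'i::finite \<Rightarrow> real^3"
  assumes psi: "\<And>i j. 0 \<le> \<psi> i j" "\<And>i j. \<psi> i j \<le> M"
    and bounds: "\<And>k. norm (x k) \<le> B" "\<And>k. norm (v k) \<le> B"
  shows "\<bar>v i \<bullet> v i + x i \<bullet> flock_accel \<sigma> \<psi> x v i\<bar>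
           \<le> (B\<^sup>2 + M * (B\<^sup>2 + 1) * (1 + real CARD('i))) * (\<bar>x i \<bullet> x i - 1\<bar> + (\<Sum>j\<in>UNIV. \<bar>x j \<bullet> v j\<bar>))"
proof -
  define N where "N = real CARD('i)"
  define \<beta> where "\<beta> = (\<Sum>j\<in>UNIV. \<bar>x j \<bullet> v j\<bar>)"
  define coupling where
    "coupling = (\<Sum>j\<in>UNIV. \<psi> i j / N * (x i \<bullet> align_term (x j) (x i) (v j) (v i)))"
  have "0 \<le> M"
    using psi[of i i] by linarith
  have "0 \<le> \<beta>"
    by (simp add: \<beta>_def sum_nonneg)
  have sq: "w \<bullet> w \<le> B\<^sup>2" if "norm w \<le> B" for w :: "real^3"
    using that by (simp add: power2_norm_eq_inner[symmetric] power_mono)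
  have "v i \<bullet> v i + x i \<bullet> flock_accel \<sigma> \<psi> x v i = (if x i = 0 then v i \<bullet> v i else 0) + coupling"
    by (simp add: inner_position_flock_accel coupling_def N_def)
  moreover have "\<bar>if x i = 0 then v i \<bullet> v i else 0\<bar> \<le> B\<^sup>2 * \<bar>x i \<bullet> x i - 1\<bar>"
    using sq[OF bounds(2)] by simp
  moreover have "\<bar>coupling\<bar> \<le> M * (B\<^sup>2 + 1) * (1 + N) * \<beta>"
    unfolding coupling_def N_def \<beta>_def using psi sq[OF bounds(1)] by (rule alignment_coupling_bound)
  ultimately have "\<bar>v i \<bullet> v i + x i \<bullet> flock_accel \<sigma> \<psi> x v i\<bar>
                     \<le> B\<^sup>2 * \<bar>x i \<bullet> x i - 1\<bar> + M * (B\<^sup>2 + 1) * (1 + N) * \<beta>"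
    by linarith
  also have "\<dots> \<le> (B\<^sup>2 + M * (B\<^sup>2 + 1) * (1 + N)) * (\<bar>x i \<bullet> x i - 1\<bar> + \<beta>)"
  proof -
    have "0 \<le> M * (B\<^sup>2 + 1) * (1 + N)"
      using \<open>0 \<le> M\<close> by (simp add: N_def)
    then have "0 \<le> M * (B\<^sup>2 + 1) * (1 + N) * \<bar>x i \<bullet> x i - 1\<bar>" "0 \<le> B\<^sup>2 * \<beta>"
      using \<open>0 \<le> \<beta>\<close> by simp_all
    then show ?thesis
      by (simp only: distrib_left distrib_right)
  qed
  finally show ?thesis
    by (simp add: N_def \<beta>_def)
qed

lemma energy_has_real_derivative:
  fixes x v :: "'i::finite \<Rightarrow> real \<Rightarrow> real^3" and a :: "'i \<Rightarrow> real^3"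
  assumes "\<And>k. (x k has_vector_derivative v k t) (at t within S)"
    and "\<And>k. (v k has_vector_derivative a k) (at t within S)"
  shows "((\<lambda>s. energy \<sigma> (\<lambda>k. x k s) (\<lambda>k. v k s)) has_real_derivative
           2 / real CARD('i) * (\<Sum>k\<in>UNIV. v k t \<bullet> a k)
           + \<sigma> / (real CARD('i))\<^sup>2 * (\<Sum>k\<in>UNIV. \<Sum>l\<in>UNIV. (x k t - x l t) \<bullet> (v k t - v l t)))
         (at t within S)"
proof -
  have "((\<lambda>s. energy \<sigma> (\<lambda>k. x k s) (\<lambda>k. v k s)) has_real_derivative
           1 / real CARD('i) * (\<Sum>k\<in>UNIV. 2 * (v k t \<bullet> a k))
           + \<sigma> / (2 * (real CARD('i))\<^sup>2) * (\<Sum>k\<in>UNIV. \<Sum>l\<in>UNIV. 2 * ((x k t - x l t) \<bullet> (v k t - v l t))))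
         (at t within S)"
    unfolding energy_def
    by (intro DERIV_add DERIV_cmult DERIV_sum has_real_derivative_norm_power2
        has_vector_derivative_diff assms)
  then show ?thesis
    by (simp add: sum_distrib_left[symmetric])
qed

lemma alignment_power_cancellation:
  fixes x v :: "'i::finite \<Rightarrow> real^3"
  assumes unit: "\<And>k. norm (x k) = 1" and sym: "\<And>i j. \<psi> i j = \<psi> j i"
  shows "2 * (\<Sum>i\<in>UNIV. \<Sum>j\<in>UNIV. \<psi> i j * (v i \<bullet> align_term (x j) (x i) (v j) (v i)))
           = - (\<Sum>i\<in>UNIV. \<Sum>j\<in>UNIV. \<psi> i j * (norm (align_term (x j) (x i) (v j) (v i)))\<^sup>2)"
proof -
  define A where "A i j = align_term (x j) (x i) (v j) (v i)" for i j
  define W where "W i j = (if x j = - x i then 0 else \<psi> i j)" for i j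
  have W_sym: "W i j = W j i" for i j
    by (auto simp: W_def sym minus_equation_iff)
  have pointwise: "\<psi> i j * (2 * (v i \<bullet> A i j) + (norm (A i j))\<^sup>2)
                     = W i j * ((norm (v j))\<^sup>2 - (norm (v i))\<^sup>2)" for i j
    unfolding A_def W_def by (simp add: align_term_energy_identity unit)
  have "2 * (\<Sum>i\<in>UNIV. \<Sum>j\<in>UNIV. \<psi> i j * (v i \<bullet> A i j)) + (\<Sum>i\<in>UNIV. \<Sum>j\<in>UNIV. \<psi> i j * (norm (A i j))\<^sup>2)
          = (\<Sum>i\<in>UNIV. \<Sum>j\<in>UNIV. \<psi> i j * (2 * (v i \<bullet> A i j) + (norm (A i j))\<^sup>2))"
    by (simp add: sum_distrib_left sum.distrib algebra_simps)
  also have "\<dots> = (\<Sum>i\<in>UNIV. \<Sum>j\<in>UNIV. W i j * ((norm (v j))\<^sup>2 - (norm (v i))\<^sup>2))"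
    by (simp only: pointwise)
  also have "\<dots> = 0"
    using W_sym by (rule sum_symmetric_weighted_differences[OF finite_class.finite_UNIV])
  finally show ?thesis
    unfolding A_def by linarith
qed

lemma flock_power_balance:
  fixes x v :: "'i::finite \<Rightarrow> real^3"
  assumes unit: "\<And>k. norm (x k) = 1" and tangent: "\<And>k. x k \<bullet> v k = 0"
    and sym: "\<And>i j. \<psi> i j = \<psi> j i"
  shows "2 / real CARD('i) * (\<Sum>k\<in>UNIV. v k \<bullet> flock_accel \<sigma> \<psi> x v k)
           + \<sigma> / (real CARD('i))\<^sup>2 * (\<Sum>k\<in>UNIV. \<Sum>l\<in>UNIV. (x k - x l) \<bullet> (v k - v l))
         = - (\<Sum>i\<in>UNIV. \<Sum>j\<in>UNIV. \<psi> i j / (real CARD('i))\<^sup>2 *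
                (norm (align_term (x j) (x i) (v j) (v i)))\<^sup>2)"
proof -
  define N where "N = real CARD('i)"
  define A where "A i j = align_term (x j) (x i) (v j) (v i)" for i j
  define S where "S = (\<Sum>k\<in>UNIV. \<Sum>l\<in>UNIV. v k \<bullet> x l)"
  define S1 where "S1 = (\<Sum>i\<in>UNIV. \<Sum>j\<in>UNIV. \<psi> i j * (v i \<bullet> A i j))"
  define S3 where "S3 = (\<Sum>i\<in>UNIV. \<Sum>j\<in>UNIV. \<psi> i j * (norm (A i j))\<^sup>2)"
  have balance: "2 * S1 = - S3"
    unfolding S1_def S3_def A_def using unit sym by (rule alignment_power_cancellation)
  have power: "(\<Sum>k\<in>UNIV. v k \<bullet> flock_accel \<sigma> \<psi> x v k) = S1 / N + \<sigma> / N * S"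
    by (simp add: inner_velocity_flock_accel unit tangent A_def N_def S_def S1_def sum.distrib
        sum_divide_distrib sum_distrib_left)
  have pairs: "(\<Sum>k\<in>UNIV. \<Sum>l\<in>UNIV. (x k - x l) \<bullet> (v k - v l)) = - 2 * S"
    unfolding S_def by (rule sum_inner_pairwise_differences) (simp_all add: tangent)
  have dissipation: "(\<Sum>i\<in>UNIV. \<Sum>j\<in>UNIV. \<psi> i j / N\<^sup>2 * (norm (align_term (x j) (x i) (v j) (v i)))\<^sup>2)
                       = S3 / N\<^sup>2"
    by (simp add: S3_def A_def sum_divide_distrib)
  have "N \<noteq> 0"
    by (simp add: N_def)
  then show ?thesis
    unfolding N_def[symmetric] power pairs dissipation using balance
    by (simp add: field_simps power2_eq_square)
qed

lemma flock_energy_dissipation: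
  fixes x v :: "'i::finite \<Rightarrow> real \<Rightarrow> real^3"
  assumes "\<And>k. (x k has_vector_derivative v k t) (at t within S)"
    and "\<And>k. (v k has_vector_derivative flock_accel \<sigma> \<psi> (\<lambda>k. x k t) (\<lambda>k. v k t) k) (at t within S)"
    and "\<And>k. norm (x k t) = 1" and "\<And>k. x k t \<bullet> v k t = 0" and "\<And>i j. \<psi> i j = \<psi> j i"
  shows "((\<lambda>s. energy \<sigma> (\<lambda>k. x k s) (\<lambda>k. v k s)) has_real_derivative
           - (\<Sum>i\<in>UNIV. \<Sum>j\<in>UNIV. \<psi> i j / (real CARD('i))\<^sup>2 *
                (norm (align_term (x j t) (x i t) (v j t) (v i t)))\<^sup>2))
         (at t within S)"
  using energy_has_real_derivative[where x = x and v = v and \<sigma> = \<sigma>, OF assms(1,2)]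
  unfolding flock_power_balance[of "\<lambda>k. x k t" "\<lambda>k. v k t" \<psi> \<sigma>, OF assms(3-5)] .

lemma Max_norm_le_sqrt_energy:
  fixes x v :: "'i::finite \<Rightarrow> real^3"
  assumes "\<sigma> \<ge> 0" and "energy \<sigma> x v \<le> e"
  shows "Max (range (\<lambda>i. norm (v i))) \<le> sqrt (real CARD('i) * e)"
proof -
  have "norm (v i) \<le> sqrt (real CARD('i) * e)" for i
  proof (rule real_le_rsqrt)
    have "(norm (v i))\<^sup>2 \<le> (\<Sum>k\<in>UNIV. (norm (v k))\<^sup>2)"
      by (rule member_le_sum) auto
    also have "\<dots> \<le> (\<Sum>k\<in>UNIV. (norm (v k))\<^sup>2)
        + real CARD('i) * (\<sigma> / (2 * (real CARD('i))\<^sup>2) * (\<Sum>k\<in>UNIV. \<Sum>l\<in>UNIV. (norm (x k - x l))\<^sup>2))"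
      using assms(1) by (simp add: sum_nonneg)
    also have "\<dots> = real CARD('i) * energy \<sigma> x v"
      by (simp add: energy_def algebra_simps)
    also have "\<dots> \<le> real CARD('i) * e"
      using assms(2) by (simp add: mult_left_mono)
    finally show "(norm (v i))\<^sup>2 \<le> real CARD('i) * e" .
  qed
  then show ?thesis
    by (simp add: Max_le_iff)
qed

lemma flock_sphere_invariant:
  fixes x v :: "'i::finite \<Rightarrow> real \<Rightarrow> real^3" and \<psi> :: "'i \<Rightarrow> 'i \<Rightarrow> real \<Rightarrow> real"
  assumes psi: "\<And>i j t. 0 \<le> \<psi> i j t" "\<And>i j t. \<psi> i j t \<le> M"
    and dx: "\<And>i t. 0 \<le> t \<Longrightarrow> (x i has_vector_derivative v i t) (at t within {0..})"
    and dv: "\<And>i t. 0 \<le> t \<Longrightarrow> (v i has_vector_derivative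
               flock_accel \<sigma> (\<lambda>i j. \<psi> i j t) (\<lambda>k. x k t) (\<lambda>k. v k t) i) (at t within {0..})"
    and init_norm: "\<And>i. norm (x i 0) = 1" and init_tang: "\<And>i. x i 0 \<bullet> v i 0 = 0"
    and "0 \<le> T"
  shows "norm (x i T) = 1 \<and> x i T \<bullet> v i T = 0"
proof -
  obtain B where Bx: "\<And>i s. s \<in> {0..T} \<Longrightarrow> norm (x i s) \<le> B"
    and Bv: "\<And>i s. s \<in> {0..T} \<Longrightarrow> norm (v i s) \<le> B"
    by (rule trajectory_bounded[where x = x and v = v and T = T, OF dx dv]; blast)
  define a where "a = (\<lambda>i s. x i s \<bullet> x i s - 1)"
  define b where "b = (\<lambda>i s. x i s \<bullet> v i s)"
  define d where "d = (\<lambda>i s. v i s \<bullet> v i s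
                    + x i s \<bullet> flock_accel \<sigma> (\<lambda>i j. \<psi> i j s) (\<lambda>k. x k s) (\<lambda>k. v k s) i)"
  define C where "C = B\<^sup>2 + M * (B\<^sup>2 + 1) * (1 + real CARD('i))"
  have "0 \<le> M"
    using psi[of i i 0] by linarith
  then have "0 \<le> C"
    by (simp add: C_def)
  have "a i T = 0 \<and> b i T = 0"
  proof (rule coupled_defects_vanish[OF \<open>0 \<le> T\<close> \<open>0 \<le> C\<close>])
    show "(a i has_real_derivative 2 * b i s) (at s within {0..})" if "0 \<le> s" for i s
    proof -
      have "((\<lambda>s. x i s \<bullet> x i s - 1) has_real_derivative v i s \<bullet> x i s + x i s \<bullet> v i s - 0)
              (at s within {0..})"
        by (intro DERIV_diff has_real_derivative_inner dx[OF that] DERIV_const)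
      then show ?thesis
        by (simp add: a_def b_def inner_commute)
    qed
    show "(b i has_real_derivative d i s) (at s within {0..})" if "0 \<le> s" for i s
      unfolding b_def d_def by (rule has_real_derivative_inner[OF dx[OF that] dv[OF that]])
    show "\<bar>d i s\<bar> \<le> C * (\<bar>a i s\<bar> + (\<Sum>j\<in>UNIV. \<bar>b j s\<bar>))" if "s \<in> {0..T}" for i s
      unfolding a_def b_def d_def C_def using psi Bx[OF that] Bv[OF that]
      by (intro flock_accel_defect_bound)
    show "a i 0 = 0" "b i 0 = 0" for i
      using init_norm[of i] init_tang[of i] by (simp_all add: a_def b_def power2_norm_eq_inner[symmetric])
  qed
  then show ?thesis
    by (simp add: a_def b_def norm_eq_sqrt_inner)
qed

theorem proposition3p3:
  fixes x v :: "'i::finite \<Rightarrow> real \<Rightarrow> real^3"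
    and \<psi> :: "'i \<Rightarrow> 'i \<Rightarrow> real \<Rightarrow> real"
    and \<sigma> :: real
  assumes sigma: "\<sigma> \<ge> 0"
    and psi_nonneg: "\<And>i j t. \<psi> i j t \<ge> 0"
    and psi_bounded: "\<exists>M. \<forall>i j t. \<psi> i j t \<le> M"
    and psi_sym: "\<And>i j t. \<psi> i j t = \<psi> j i t"
    and dx: "\<And>i t. t \<ge> 0 \<Longrightarrow> (x i has_vector_derivative v i t) (at t within {0..})"
    and dv: "\<And>i t. t \<ge> 0 \<Longrightarrow> (v i has_vector_derivative
              (- ((norm (v i t))^2 / (norm (x i t))^2) *\<^sub>R x i t
               + (\<Sum>j\<in>UNIV. (\<psi> i j t / real CARD('i)) *\<^sub>R
                                 align_term (x j t) (x i t) (v j t) (v i t))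
               + (\<Sum>k\<in>UNIV. (\<sigma> / real CARD('i)) *\<^sub>R
                   ((norm (x i t))^2 *\<^sub>R x k t - (x i t \<bullet> x k t) *\<^sub>R x i t))))
              (at t within {0..})"
    and init_norm: "\<And>i. norm (x i 0) = 1"
    and init_tang: "\<And>i. v i 0 \<bullet> x i 0 = 0"
  shows "(\<forall>t\<ge>0. ((\<lambda>s. energy \<sigma> (\<lambda>k. x k s) (\<lambda>k. v k s)) has_real_derivative
             - (\<Sum>i\<in>UNIV. \<Sum>j\<in>UNIV. \<psi> i j t / (real CARD('i))^2 *
                  (norm (align_term (x j t) (x i t) (v j t) (v i t)))^2))
             (at t within {0..}))
       \<and> (\<forall>t\<ge>0. Max (range (\<lambda>i. norm (v i t)))
                 \<le> sqrt (real CARD('i) * energy \<sigma> (\<lambda>k. x k 0) (\<lambda>k. v k 0)))"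
proof -
  define E where "E = (\<lambda>s. energy \<sigma> (\<lambda>k. x k s) (\<lambda>k. v k s))"
  define D where "D t = - (\<Sum>i\<in>UNIV. \<Sum>j\<in>UNIV. \<psi> i j t / (real CARD('i))\<^sup>2 *
                     (norm (align_term (x j t) (x i t) (v j t) (v i t)))\<^sup>2)" for t
  obtain M where M: "\<And>i j t. \<psi> i j t \<le> M"
    using psi_bounded by blast
  have accel: "(v i has_vector_derivative flock_accel \<sigma> (\<lambda>i j. \<psi> i j t) (\<lambda>k. x k t) (\<lambda>k. v k t) i)
                 (at t within {0..})" if "0 \<le> t" for i t
    unfolding flock_accel_def by (rule dv[OF that])
  have on_sphere: "norm (x i t) = 1 \<and> x i t \<bullet> v i t = 0" if "0 \<le> t" for i t
    using init_tang
    by (intro flock_sphere_invariant[OF psi_nonneg M dx accel init_norm _ that]; simp add: inner_commute)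
  have dE: "(E has_real_derivative D t) (at t within {0..})" if "0 \<le> t" for t
    unfolding E_def D_def using on_sphere[OF that] psi_sym
    by (intro flock_energy_dissipation dx accel that; simp)
  have decreasing: "E t \<le> E 0" if "0 \<le> t" for t
    using dE that psi_nonneg
    by (intro DERIV_nonpos_within_imp_decreasing[of 0 t "{0..}" E D]; auto simp: D_def intro!: sum_nonneg)
  have "Max (range (\<lambda>i. norm (v i t))) \<le> sqrt (real CARD('i) * E 0)" if "0 \<le> t" for t
    using decreasing[OF that] unfolding E_def by (rule Max_norm_le_sqrt_energy[OF sigma])
  then show ?thesis
    using dE by (simp add: E_def D_def)
qed

end
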